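(* Assume (A1) and (A2). Let $\psi$ be a graph functional with finite support, let $K$ be such that $\psi(H)=0$ whenever $e(H)\ge K$, let $M:=\sup_H|\psi(H)|<\infty$, and let $\Psi(G):=\sum_{v\in V(G)}\psi(\mathcal C(v))$. Let $V$ be a uniformly random vertex of $G^*(n,\mathbf d)$. Then for $n$ so large that $N\ge\mu n/2$ and $N\ge4K$, with $c:=4+16/\mu$, $$\mathrm{Var}\big(\Psi(G^*(n,\mathbf d))\big)\le cMK^2\,E|\psi(\mathcal C(V))|\,n.$$
   Context: For each $n\ge1$ a degree sequence $\mathbf d=(d_1,\dots,d_n)$ of non-negative integers is given, with even sum $N:=\sum_id_i$. $G^*(n,\mathbf d)$ is the configuration-model multigraph on $v_1,\dots,v_n$: $v_i$ receives $d_i$ half-edges, a uniformly random perfect matching of all half-edges gives the edges (loops and multiple edges allowed). $n_k:=|\{i:d_i=k\}|$, $D_n$ with $P(D_n=k)=n_k/n$. (A1) there is a probability distribution $(p_k)$ with $n_k/n\to p_k$ for all $k$ and $\mu:=\sum_kkp_k\in(0,\infty)$. (A2) $E D_n\to\mu$. A graph functional is a real function on unlabelled multigraphs; finite support means $\psi(H)\ne0$ for only finitely many unlabelled $H$. $\mathcal C(v)$ is the component containing $v$. *)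

theory Defs
  imports "HOL-Probability.Probability" "HOL-Library.Uprod" "HOL-Library.Multiset"
begin

text \<open>Multigraphs on vertices of type nat: a vertex set and a multiset of unordered
  pairs (edges; a loop at v is Upair v v).\<close>
type_synonym mgraph = "nat set \<times> nat uprod multiset"

definition wf_mgraph :: "mgraph \<Rightarrow> bool" where
  "wf_mgraph G \<longleftrightarrow> finite (fst G) \<and> (\<forall>e\<in>#snd G. set_uprod e \<subseteq> fst G)"

definition num_edges :: "mgraph \<Rightarrow> nat" where
  "num_edges G = size (snd G)"

definition mgraph_iso :: "mgraph \<Rightarrow> mgraph \<Rightarrow> bool" where
  "mgraph_iso G H \<longleftrightarrow> (\<exists>f. bij_betw f (fst G) (fst H) \<and> image_mset (map_uprod f) (snd G) = snd H)"

text \<open>A graph functional: a real function on unlabelled multigraphs, i.e. an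
  isomorphism-invariant function on (well-formed) labelled multigraphs.\<close>
definition graph_functional :: "(mgraph \<Rightarrow> real) \<Rightarrow> bool" where
  "graph_functional \<psi> \<longleftrightarrow>
     (\<forall>G H. wf_mgraph G \<longrightarrow> wf_mgraph H \<longrightarrow> mgraph_iso G H \<longrightarrow> \<psi> G = \<psi> H)"

definition finite_support :: "(mgraph \<Rightarrow> real) \<Rightarrow> bool" where
  "finite_support \<psi> \<longleftrightarrow>
     (\<exists>S. finite S \<and> (\<forall>G. wf_mgraph G \<longrightarrow> \<psi> G \<noteq> 0 \<longrightarrow> (\<exists>H\<in>S. mgraph_iso G H)))"

definition adjacent :: "mgraph \<Rightarrow> nat \<Rightarrow> nat \<Rightarrow> bool" where
  "adjacent G u w \<longleftrightarrow> Upair u w \<in># snd G"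

definition comp_vertices :: "mgraph \<Rightarrow> nat \<Rightarrow> nat set" where
  "comp_vertices G v = {u \<in> fst G. (adjacent G)\<^sup>*\<^sup>* v u}"

definition component :: "mgraph \<Rightarrow> nat \<Rightarrow> mgraph" where
  "component G v = (comp_vertices G v, filter_mset (\<lambda>e. set_uprod e \<subseteq> comp_vertices G v) (snd G))"

text \<open>Half-edges of the configuration model: (i,j) is the j-th half-edge of vertex v_i.\<close>
definition half_edges :: "nat \<Rightarrow> (nat \<Rightarrow> nat) \<Rightarrow> (nat \<times> nat) set" where
  "half_edges n d = {(i, j). i < n \<and> j < d i}"

definition perfect_matchings :: "'a set \<Rightarrow> 'a set set set" where
  "perfect_matchings S =
     {P. (\<forall>e\<in>P. e \<subseteq> S \<and> card e = 2) \<and> (\<forall>x\<in>S. \<exists>!e. e \<in> P \<and> x \<in> e)}"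

definition edge_of_pair :: "(nat \<times> nat) set \<Rightarrow> nat uprod" where
  "edge_of_pair e = (THE u. \<exists>a b. e = {a, b} \<and> a \<noteq> b \<and> u = Upair (fst a) (fst b))"

definition config_graph :: "nat \<Rightarrow> (nat \<times> nat) set set \<Rightarrow> mgraph" where
  "config_graph n P = ({..<n}, image_mset edge_of_pair (mset_set P))"

definition config_matching :: "nat \<Rightarrow> (nat \<Rightarrow> nat) \<Rightarrow> (nat \<times> nat) set set pmf" where
  "config_matching n d = pmf_of_set (perfect_matchings (half_edges n d))"

definition config_model :: "nat \<Rightarrow> (nat \<Rightarrow> nat) \<Rightarrow> mgraph pmf" where
  "config_model n d = map_pmf (config_graph n) (config_matching n d)"

definition Psi :: "(mgraph \<Rightarrow> real) \<Rightarrow> mgraph \<Rightarrow> real" where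
  "Psi \<psi> G = (\<Sum>v\<in>fst G. \<psi> (component G v))"

end

theory Submission
  imports Defs
begin

text \<open>Perfect matchings of the half-edges are identified with fixed-point-free involutions.
  Since Var \<Psi> is the sum over vertices v of E[\<psi>(C(v)) (\<Psi> - E \<Psi>)], it suffices to bound,
  for each v and each configuration f0 with \<psi>(C(v)) \<noteq> 0, the mean of \<Psi> - E \<Psi> over the
  class of configurations that pair the half-edges of C(v) as f0 does. Forcing these fewer than
  K pairs into a uniformly random involution by successive switchings maps the uniform
  distribution onto the uniform distribution on that class, and changes \<Psi> only through the
  components meeting one of two sets of at most K vertices; the components through a fixed vertex
  contribute at most K M. Hence the class mean of \<Psi> - E \<Psi> is at most 2 K^2 M in absolute
  value, which gives Var \<Psi> \<le> 2 M K^2 n E|\<psi>(C(V))|, and 2 \<le> 4 + 16/\<mu>.\<close>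

section \<open>Perfect matchings as fixed-point-free involutions\<close>

definition fpf_involutions :: "'a set \<Rightarrow> ('a \<Rightarrow> 'a) set" where
  "fpf_involutions S =
     {f. (\<forall>x\<in>S. f x \<in> S \<and> f x \<noteq> x \<and> f (f x) = x) \<and> (\<forall>x. x \<notin> S \<longrightarrow> f x = x)}"

definition matching_of :: "'a set \<Rightarrow> ('a \<Rightarrow> 'a) \<Rightarrow> 'a set set" where
  "matching_of S f = (\<lambda>x. {x, f x}) ` S"

lemma fpf_involutionsD:
  assumes "f \<in> fpf_involutions S" "x \<in> S"
  shows "f x \<in> S" "f x \<noteq> x" "f (f x) = x"
  using assms by (auto simp: fpf_involutions_def)

lemma fpf_involutions_outside: "f \<in> fpf_involutions S \<Longrightarrow> x \<notin> S \<Longrightarrow> f x = x"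
  by (auto simp: fpf_involutions_def)

lemma finite_fpf_involutions:
  assumes "finite S"
  shows "finite (fpf_involutions S)"
proof -
  let ?restrict = "\<lambda>f x. if x \<in> S then f x else undefined"
  have "?restrict ` fpf_involutions S
          \<subseteq> {g. \<forall>x. (x \<in> S \<longrightarrow> g x \<in> S) \<and> (x \<notin> S \<longrightarrow> g x = undefined)}"
    by (auto simp: fpf_involutions_def)
  then have "finite (?restrict ` fpf_involutions S)"
    using finite_set_of_finite_funs[OF assms assms] finite_subset by blast
  moreover have "inj_on ?restrict (fpf_involutions S)"
  proof (rule inj_onI)
    fix f g assume fg: "f \<in> fpf_involutions S" "g \<in> fpf_involutions S" "?restrict f = ?restrict g"
    show "f = g"
    proof
      fix x show "f x = g x"
        using fun_cong[OF fg(3), of x] fg(1,2) by (cases "x \<in> S") (auto simp: fpf_involutions_def)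
    qed
  qed
  ultimately show ?thesis using finite_imageD by blast
qed

lemma fpf_involutions_nonempty:
  assumes "finite S" "even (card S)"
  shows "fpf_involutions S \<noteq> {}"
  using assms
proof (induction "card S" arbitrary: S rule: less_induct)
  case less
  show ?case
  proof (cases "S = {}")
    case True
    then have "id \<in> fpf_involutions S" by (auto simp: fpf_involutions_def)
    then show ?thesis by blast
  next
    case False
    then obtain a where a: "a \<in> S" by blast
    have "card S \<noteq> 1" using less.prems by auto
    then have "S \<noteq> {a}" by auto
    then have "S - {a} \<noteq> {}" using a by blast
    then obtain b where b: "b \<in> S" "b \<noteq> a" by blast
    let ?S = "S - {a, b}"
    have "card ?S = card S - 2" using a b less.prems(1) by (simp add: card_Diff_subset)
    moreover have "card {a, b} \<le> card S" using a b less.prems(1) by (intro card_mono) auto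
    ultimately have "card ?S = card S - 2" "card S \<ge> 2" using b by simp_all
    then have "card ?S < card S" "even (card ?S)" using less.prems by auto
    then obtain g where g: "g \<in> fpf_involutions ?S" using less.hyps less.prems(1) by blast
    have "g(a := b, b := a) \<in> fpf_involutions S"
      using g a b unfolding fpf_involutions_def by auto
    then show ?thesis by blast
  qed
qed

lemma matching_of_in_perfect_matchings:
  assumes f: "f \<in> fpf_involutions S"
  shows "matching_of S f \<in> perfect_matchings S"
  unfolding perfect_matchings_def matching_of_def
proof (intro CollectI conjI ballI)
  fix e assume "e \<in> (\<lambda>x. {x, f x}) ` S"
  then obtain x where x: "x \<in> S" "e = {x, f x}" by blast
  then show "e \<subseteq> S" "card e = 2" using fpf_involutionsD[OF f x(1)] by auto
next
  fix y assume y: "y \<in> S"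
  show "\<exists>!e. e \<in> (\<lambda>x. {x, f x}) ` S \<and> y \<in> e"
  proof (rule ex1I[of _ "{y, f y}"])
    show "{y, f y} \<in> (\<lambda>x. {x, f x}) ` S \<and> y \<in> {y, f y}" using y by auto
  next
    fix e assume "e \<in> (\<lambda>x. {x, f x}) ` S \<and> y \<in> e"
    then obtain x where "x \<in> S" "e = {x, f x}" "y \<in> e" by blast
    then show "e = {y, f y}" using fpf_involutionsD[OF f \<open>x \<in> S\<close>] by auto
  qed
qed

lemma inj_on_matching_of: "inj_on (matching_of S) (fpf_involutions S)"
proof (rule inj_onI)
  fix f g
  assume f: "f \<in> fpf_involutions S" and g: "g \<in> fpf_involutions S"
    and eq: "matching_of S f = matching_of S g"
  show "f = g"
  proof
    fix x show "f x = g x"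
    proof (cases "x \<in> S")
      case True
      then have "{x, f x} \<in> matching_of S g" using eq by (auto simp: matching_of_def)
      then obtain y where y: "y \<in> S" "{x, f x} = {y, g y}" by (auto simp: matching_of_def)
      then show ?thesis
        using fpf_involutionsD[OF g y(1)] fpf_involutionsD[OF f True] by (auto simp: doubleton_eq_iff)
    next
      case False
      then show ?thesis using f g by (simp add: fpf_involutions_outside)
    qed
  qed
qed

lemma perfect_matching_partner_unique:
  assumes P: "P \<in> perfect_matchings S" and x: "x \<in> S"
  shows "\<exists>!y. {x, y} \<in> P \<and> y \<noteq> x"
proof -
  have unique: "\<exists>!e. e \<in> P \<and> x \<in> e" using P x by (simp add: perfect_matchings_def)
  then obtain e where e: "e \<in> P" "x \<in> e" by blast
  have "card e = 2" using P e(1) by (auto simp: perfect_matchings_def)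
  then obtain y where y: "e = {x, y}" "y \<noteq> x"
    using e(2) by (metis card_2_iff doubleton_eq_iff insertE singletonD)
  show ?thesis
  proof (rule ex1I[of _ y])
    show "{x, y} \<in> P \<and> y \<noteq> x" using e y by simp
  next
    fix z assume "{x, z} \<in> P \<and> z \<noteq> x"
    then have "{x, z} = e" using unique e by blast
    then show "z = y" using y by (auto simp: doubleton_eq_iff)
  qed
qed

lemma perfect_matching_is_matching_of:
  assumes P: "P \<in> perfect_matchings S"
  shows "\<exists>f\<in>fpf_involutions S. P = matching_of S f"
proof -
  note partner = perfect_matching_partner_unique[OF P]
  have edge: "e \<subseteq> S" "card e = 2" if "e \<in> P" for e
    using P that by (auto simp: perfect_matchings_def)
  define f where "f x = (if x \<in> S then (THE y. {x, y} \<in> P \<and> y \<noteq> x) else x)" for x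
  have f_edge: "{x, f x} \<in> P" "f x \<noteq> x" if "x \<in> S" for x
    using theI'[OF partner[OF that]] that by (auto simp: f_def)
  have f_in: "f x \<in> S" if "x \<in> S" for x using edge(1)[OF f_edge(1)[OF that]] by auto
  have f_f: "f (f x) = x" if "x \<in> S" for x
  proof -
    have "{f x, f (f x)} \<in> P" "f (f x) \<noteq> f x" using f_edge[OF f_in[OF that]] by auto
    moreover have "{f x, x} \<in> P" using f_edge[OF that] by (simp add: insert_commute)
    ultimately show ?thesis using partner[OF f_in[OF that]] f_edge[OF that] by metis
  qed
  have f: "f \<in> fpf_involutions S" using f_in f_edge f_f by (auto simp: fpf_involutions_def f_def)
  have "P = matching_of S f"
  proof
    show "matching_of S f \<subseteq> P" using f_edge by (auto simp: matching_of_def)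
  next
    show "P \<subseteq> matching_of S f"
    proof
      fix e assume e: "e \<in> P"
      obtain x y where xy: "e = {x, y}" "x \<noteq> y" using edge(2)[OF e] by (metis card_2_iff)
      have x: "x \<in> S" using edge(1)[OF e] xy by auto
      have "y = f x" using partner[OF x] f_edge[OF x] e xy by metis
      then show "e \<in> matching_of S f" using xy x by (auto simp: matching_of_def)
    qed
  qed
  then show ?thesis using f by blast
qed

lemma bij_betw_matching_of:
  "bij_betw (matching_of S) (fpf_involutions S) (perfect_matchings S)"
  unfolding bij_betw_def
  using inj_on_matching_of matching_of_in_perfect_matchings perfect_matching_is_matching_of by blast

section \<open>Switchings\<close>

text \<open>The switching that replaces the pairs {a, f a} and {c, f c} by {a, c} and {f a, f c}.\<close>

definition switch :: "'a \<Rightarrow> 'a \<Rightarrow> ('a \<Rightarrow> 'a) \<Rightarrow> ('a \<Rightarrow> 'a)" where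
  "switch a c f = (if f a = c then f else f(a := c, c := a, f a := f c, f c := f a))"

lemma switch_other: "x \<noteq> a \<Longrightarrow> x \<noteq> c \<Longrightarrow> x \<noteq> f a \<Longrightarrow> x \<noteq> f c \<Longrightarrow> switch a c f x = f x"
  by (auto simp: switch_def)

context
  fixes S :: "'a set" and f :: "'a \<Rightarrow> 'a" and a c :: 'a
  assumes f: "f \<in> fpf_involutions S" and a: "a \<in> S" and c: "c \<in> S" and ac: "a \<noteq> c"
begin

lemma switch_in_fpf_involutions: "switch a c f \<in> fpf_involutions S"
proof (cases "f a = c")
  case True
  then show ?thesis using f by (simp add: switch_def)
next
  case False
  have fa: "f a \<in> S" "f a \<noteq> a" "f (f a) = a" using fpf_involutionsD[OF f a] by auto
  have fc: "f c \<in> S" "f c \<noteq> c" "f (f c) = c" using fpf_involutionsD[OF f c] by auto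
  have fx: "f x \<in> S" "f x \<noteq> x" "f (f x) = x" if "x \<in> S" for x
    using fpf_involutionsD[OF f that] by auto
  have d: "f c \<noteq> a" "f a \<noteq> f c" using False fa fc ac by metis+
  show ?thesis unfolding fpf_involutions_def switch_def using False
  proof (intro CollectI conjI ballI allI impI, goal_cases)
    case (1 x) then show ?case using fx[OF 1(2)] a c fa fc ac d by auto
  next
    case (2 x) then show ?case using fx[OF 2(2)] a c fa fc ac d by auto
  next
    case (3 x) then show ?case using fx[OF 3(2)] a c fa fc ac d by auto
  next
    case (4 x) then show ?case using fpf_involutions_outside[OF f 4(2)] a c fa fc by auto
  qed
qed

lemma switch_at: "switch a c f a = c"
  using fpf_involutionsD[OF f a] fpf_involutionsD[OF f c] ac by (auto simp: switch_def)

lemma switch_at_partner: "f a \<noteq> c \<Longrightarrow> switch a c f (f c) = f a"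
  using fpf_involutionsD[OF f a] fpf_involutionsD[OF f c] ac by (auto simp: switch_def)

lemma switch_switch_back: "switch a (f a) (switch a c f) = f"
proof (cases "f a = c")
  case True
  then show ?thesis by (simp add: switch_def)
next
  case False
  have fa: "f a \<in> S" "f a \<noteq> a" "f (f a) = a" using fpf_involutionsD[OF f a] by auto
  have fc: "f c \<in> S" "f c \<noteq> c" "f (f c) = c" using fpf_involutionsD[OF f c] by auto
  have "f c \<noteq> a" "f a \<noteq> f c" using False fa fc ac by metis+
  then show ?thesis using False fa fc ac by (auto simp: switch_def fun_eq_iff)
qed

end

definition pair_elems :: "('a \<times> 'a) list \<Rightarrow> 'a set" where
  "pair_elems xs = set (concat (map (\<lambda>p. [fst p, snd p]) xs))"

definition disjoint_pairs :: "'a set \<Rightarrow> ('a \<times> 'a) list \<Rightarrow> bool" where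
  "disjoint_pairs S xs \<longleftrightarrow> distinct (concat (map (\<lambda>p. [fst p, snd p]) xs)) \<and> pair_elems xs \<subseteq> S"

definition involutions_with_pairs :: "'a set \<Rightarrow> ('a \<times> 'a) list \<Rightarrow> ('a \<Rightarrow> 'a) set" where
  "involutions_with_pairs S xs = {f \<in> fpf_involutions S. \<forall>p\<in>set xs. f (fst p) = snd p}"

primrec switch_all :: "('a \<times> 'a) list \<Rightarrow> ('a \<Rightarrow> 'a) \<Rightarrow> ('a \<Rightarrow> 'a)" where
  "switch_all [] f = f"
| "switch_all (p # xs) f = switch (fst p) (snd p) (switch_all xs f)"

lemma pair_elems_Nil [simp]: "pair_elems [] = {}"
  by (simp add: pair_elems_def)

lemma pair_elems_Cons [simp]: "pair_elems (p # xs) = insert (fst p) (insert (snd p) (pair_elems xs))"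
  by (auto simp: pair_elems_def)

lemma pair_elems_iff: "q \<in> pair_elems xs \<longleftrightarrow> (\<exists>p\<in>set xs. q = fst p \<or> q = snd p)"
  by (auto simp: pair_elems_def)

lemma fst_in_pair_elems: "p \<in> set xs \<Longrightarrow> fst p \<in> pair_elems xs"
  by (force simp: pair_elems_def)

lemma disjoint_pairs_Cons:
  "disjoint_pairs S (p # xs) \<longleftrightarrow> disjoint_pairs S xs \<and> fst p \<noteq> snd p
     \<and> fst p \<notin> pair_elems xs \<and> snd p \<notin> pair_elems xs \<and> fst p \<in> S \<and> snd p \<in> S"
  by (auto simp: disjoint_pairs_def pair_elems_def)

lemma involutions_with_pairs_Nil [simp]: "involutions_with_pairs S [] = fpf_involutions S"
  by (simp add: involutions_with_pairs_def)

lemma involutions_with_pairs_Cons_subset: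
  "involutions_with_pairs S (p # xs) \<subseteq> involutions_with_pairs S xs"
  by (auto simp: involutions_with_pairs_def)

lemma involutions_with_pairs_avoid:
  assumes f: "f \<in> involutions_with_pairs S xs" and y: "y \<in> S" "y \<notin> pair_elems xs"
  shows "f y \<notin> pair_elems xs"
proof
  assume "f y \<in> pair_elems xs"
  then obtain p where p: "p \<in> set xs" "f y = fst p \<or> f y = snd p" by (auto simp: pair_elems_def)
  have fi: "f \<in> fpf_involutions S" "f (fst p) = snd p"
    using f p by (auto simp: involutions_with_pairs_def)
  have "f (snd p) = fst p"
    using fi fpf_involutionsD[OF fi(1)] fpf_involutions_outside[OF fi(1)] by metis
  then have "y = fst p \<or> y = snd p" using p fi fpf_involutionsD[OF fi(1) y(1)] by metis
  then show False using y p by (auto simp: pair_elems_def)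
qed

lemma switch_in_involutions_with_pairs:
  assumes f: "f \<in> involutions_with_pairs S xs"
    and a: "a \<in> S" "a \<notin> pair_elems xs" and c: "c \<in> S" "c \<notin> pair_elems xs" and ac: "a \<noteq> c"
  shows "switch a c f \<in> involutions_with_pairs S ((a, c) # xs)"
  unfolding involutions_with_pairs_def
proof (intro CollectI conjI ballI)
  have fi: "f \<in> fpf_involutions S" using f by (simp add: involutions_with_pairs_def)
  show "switch a c f \<in> fpf_involutions S" by (rule switch_in_fpf_involutions[OF fi a(1) c(1) ac])
  have fa: "f a \<notin> pair_elems xs" "f c \<notin> pair_elems xs"
    using involutions_with_pairs_avoid[OF f] a c by auto
  fix p assume p: "p \<in> set ((a, c) # xs)"
  show "switch a c f (fst p) = snd p"
  proof (cases "p = (a, c)")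
    case True
    then show ?thesis using switch_at[OF fi a(1) c(1) ac] by simp
  next
    case False
    then have p': "p \<in> set xs" using p by simp
    then have "fst p \<noteq> a" "fst p \<noteq> c" "fst p \<noteq> f a" "fst p \<noteq> f c"
      using a c fa fst_in_pair_elems by metis+
    then have "switch a c f (fst p) = f (fst p)" by (rule switch_other)
    then show ?thesis using f p' by (simp add: involutions_with_pairs_def)
  qed
qed

lemma bij_betw_switch_partner:
  assumes ok: "disjoint_pairs S ((a, c) # xs)"
  shows "bij_betw (\<lambda>f. (switch a c f, f a)) (involutions_with_pairs S xs)
           (involutions_with_pairs S ((a, c) # xs) \<times> (S - pair_elems xs - {a}))"
proof (rule bij_betw_byWitness[where f' = "\<lambda>(g, y). switch a y g"])
  have ac: "a \<noteq> c" "a \<notin> pair_elems xs" "c \<notin> pair_elems xs" "a \<in> S" "c \<in> S"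
    using ok by (auto simp: disjoint_pairs_Cons)
  show "\<forall>f\<in>involutions_with_pairs S xs. (\<lambda>(g, y). switch a y g) (switch a c f, f a) = f"
    using switch_switch_back ac unfolding involutions_with_pairs_def by auto
  show "\<forall>q\<in>involutions_with_pairs S ((a, c) # xs) \<times> (S - pair_elems xs - {a}).
          (\<lambda>f. (switch a c f, f a)) ((\<lambda>(g, y). switch a y g) q) = q"
  proof
    fix q assume q: "q \<in> involutions_with_pairs S ((a, c) # xs) \<times> (S - pair_elems xs - {a})"
    obtain g y where gy: "q = (g, y)" by (cases q)
    have g: "g \<in> fpf_involutions S" "g a = c" and y: "y \<in> S" "y \<noteq> a"
      using q gy by (auto simp: involutions_with_pairs_def)
    show "(\<lambda>f. (switch a c f, f a)) ((\<lambda>(g, y). switch a y g) q) = q"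
      using gy switch_at[OF g(1) ac(4) y(1)] switch_switch_back[OF g(1) ac(4) y(1)] y g by auto
  qed
  show "(\<lambda>f. (switch a c f, f a)) ` involutions_with_pairs S xs
          \<subseteq> involutions_with_pairs S ((a, c) # xs) \<times> (S - pair_elems xs - {a})"
  proof (rule image_subsetI)
    fix f assume f: "f \<in> involutions_with_pairs S xs"
    have fi: "f \<in> fpf_involutions S" using f by (simp add: involutions_with_pairs_def)
    have "switch a c f \<in> involutions_with_pairs S ((a, c) # xs)"
      using switch_in_involutions_with_pairs[OF f] ac by blast
    moreover have "f a \<in> S - pair_elems xs - {a}"
      using involutions_with_pairs_avoid[OF f] fpf_involutionsD[OF fi ac(4)] ac by auto
    ultimately show "(switch a c f, f a) \<in> involutions_with_pairs S ((a, c) # xs) \<times> (S - pair_elems xs - {a})"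
      by blast
  qed
  show "(\<lambda>(g, y). switch a y g) ` (involutions_with_pairs S ((a, c) # xs) \<times> (S - pair_elems xs - {a}))
          \<subseteq> involutions_with_pairs S xs"
  proof (rule image_subsetI)
    fix q assume q: "q \<in> involutions_with_pairs S ((a, c) # xs) \<times> (S - pair_elems xs - {a})"
    obtain g y where gy: "q = (g, y)" by (cases q)
    have "g \<in> involutions_with_pairs S xs"
      using q gy involutions_with_pairs_Cons_subset by blast
    then have "switch a y g \<in> involutions_with_pairs S ((a, y) # xs)"
      using switch_in_involutions_with_pairs[of g S xs a y] ac q gy by blast
    then show "(\<lambda>(g, y). switch a y g) q \<in> involutions_with_pairs S xs"
      using gy involutions_with_pairs_Cons_subset by fastforce
  qed
qed

lemma sum_switch:
  fixes h :: "('a \<Rightarrow> 'a) \<Rightarrow> real"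
  assumes "disjoint_pairs S ((a, c) # xs)"
  shows "(\<Sum>f\<in>involutions_with_pairs S xs. h (switch a c f))
           = real (card (S - pair_elems xs - {a})) * (\<Sum>g\<in>involutions_with_pairs S ((a, c) # xs). h g)"
proof -
  let ?U = "S - pair_elems xs - {a}"
  have "(\<Sum>f\<in>involutions_with_pairs S xs. h (switch a c f))
          = (\<Sum>q\<in>involutions_with_pairs S ((a, c) # xs) \<times> ?U. h (fst q))"
    using sum.reindex_bij_betw[OF bij_betw_switch_partner[OF assms], of "\<lambda>q. h (fst q)"] by simp
  also have "\<dots> = (\<Sum>g\<in>involutions_with_pairs S ((a, c) # xs). \<Sum>y\<in>?U. h g)"
    by (subst sum.cartesian_product) (simp add: case_prod_beta)
  finally show ?thesis by (simp add: sum_distrib_left)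
qed

lemma switch_all_in_involutions_with_pairs:
  assumes "disjoint_pairs S xs" "f \<in> fpf_involutions S"
  shows "switch_all xs f \<in> involutions_with_pairs S xs"
  using assms
proof (induction xs)
  case Nil
  then show ?case by simp
next
  case (Cons p xs)
  then show ?case
    using switch_in_involutions_with_pairs[OF Cons.IH, of "fst p" "snd p"]
    by (auto simp: disjoint_pairs_Cons)
qed

lemma sum_switch_all:
  assumes "disjoint_pairs S xs"
  shows "\<exists>k. \<forall>h :: ('a \<Rightarrow> 'a) \<Rightarrow> real.
           (\<Sum>f\<in>fpf_involutions S. h (switch_all xs f)) = k * (\<Sum>g\<in>involutions_with_pairs S xs. h g)"
  using assms
proof (induction xs)
  case Nil
  show ?case by (intro exI[of _ 1]) simp
next
  case (Cons p xs)
  obtain a c where p: "p = (a, c)" by (cases p)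
  have "disjoint_pairs S xs" using Cons.prems by (simp add: disjoint_pairs_Cons)
  then obtain k where k: "\<And>h :: ('a \<Rightarrow> 'a) \<Rightarrow> real.
      (\<Sum>f\<in>fpf_involutions S. h (switch_all xs f)) = k * (\<Sum>g\<in>involutions_with_pairs S xs. h g)"
    using Cons.IH by blast
  show ?case
  proof (intro exI allI)
    fix h :: "('a \<Rightarrow> 'a) \<Rightarrow> real"
    have "(\<Sum>f\<in>fpf_involutions S. h (switch_all (p # xs) f))
            = k * (\<Sum>g\<in>involutions_with_pairs S xs. h (switch a c g))"
      using k[of "\<lambda>g. h (switch a c g)"] by (simp add: p)
    also have "\<dots> = k * real (card (S - pair_elems xs - {a}))
                      * (\<Sum>g\<in>involutions_with_pairs S (p # xs). h g)"
      using sum_switch[of S a c xs h] Cons.prems p by simp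
    finally show "(\<Sum>f\<in>fpf_involutions S. h (switch_all (p # xs) f))
        = (k * real (card (S - pair_elems xs - {a}))) * (\<Sum>g\<in>involutions_with_pairs S (p # xs). h g)" .
  qed
qed

lemma mean_switch_all:
  fixes h :: "('a \<Rightarrow> 'a) \<Rightarrow> real"
  assumes S: "finite S" and ok: "disjoint_pairs S xs" and ne: "involutions_with_pairs S xs \<noteq> {}"
  shows "(\<Sum>g\<in>involutions_with_pairs S xs. h g) / card (involutions_with_pairs S xs)
           = (\<Sum>f\<in>fpf_involutions S. h (switch_all xs f)) / card (fpf_involutions S)"
proof -
  obtain k where k: "\<And>h :: ('a \<Rightarrow> 'a) \<Rightarrow> real.
      (\<Sum>f\<in>fpf_involutions S. h (switch_all xs f)) = k * (\<Sum>g\<in>involutions_with_pairs S xs. h g)"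
    using sum_switch_all[OF ok] by blast
  have sub: "involutions_with_pairs S xs \<subseteq> fpf_involutions S"
    by (auto simp: involutions_with_pairs_def)
  have "card (involutions_with_pairs S xs) > 0" "card (fpf_involutions S) > 0"
    using ne sub finite_fpf_involutions[OF S] finite_subset by (auto simp: card_gt_0_iff)
  moreover have "card (fpf_involutions S) = k * card (involutions_with_pairs S xs)"
    using k[of "\<lambda>_. 1"] by simp
  ultimately show ?thesis using k[of h] by (cases "k = 0") auto
qed

lemma switch_all_changed:
  assumes ok: "disjoint_pairs S xs" and f: "f \<in> fpf_involutions S"
    and x: "switch_all xs f x \<noteq> f x"
  shows "x \<in> pair_elems xs \<or> f x \<in> pair_elems xs"
  using ok x
proof (induction xs arbitrary: x)
  case Nil
  then show ?case by simp
next
  case (Cons p xs)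
  obtain a c where p: "p = (a, c)" by (cases p)
  have okx: "disjoint_pairs S xs" and ac: "a \<noteq> c" "a \<in> S" "c \<in> S"
    using Cons.prems by (auto simp: disjoint_pairs_Cons p)
  define g where "g = switch_all xs f"
  have g: "g \<in> fpf_involutions S"
    using switch_all_in_involutions_with_pairs[OF okx f] by (simp add: g_def involutions_with_pairs_def)
  show ?case
  proof (cases "g x = f x")
    case False
    then show ?thesis using Cons.IH[OF okx] by (auto simp: g_def)
  next
    case True
    then have "switch a c g x \<noteq> g x" using Cons.prems by (simp add: p g_def)
    then have "x = a \<or> x = c \<or> x = g a \<or> x = g c" using switch_other by metis
    moreover have "g (g a) = a" "g (g c) = c" using fpf_involutionsD[OF g] ac by auto
    ultimately show ?thesis using True p by auto
  qed
qed

lemma switch_all_changed_few: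
  assumes ok: "disjoint_pairs S xs" and f: "f \<in> fpf_involutions S"
  shows "\<exists>R. finite R \<and> card R \<le> length xs \<and>
     (\<forall>x. switch_all xs f x \<noteq> f x \<longrightarrow> x \<in> pair_elems xs \<or> x \<in> R \<or> switch_all xs f x \<in> R)"
  using ok
proof (induction xs)
  case Nil
  then show ?case by (intro exI[of _ "{}"]) simp
next
  case (Cons p xs)
  obtain a c where p: "p = (a, c)" by (cases p)
  have okx: "disjoint_pairs S xs" and ac: "a \<noteq> c" "a \<in> S" "c \<in> S"
    using Cons.prems by (auto simp: disjoint_pairs_Cons p)
  define g where "g = switch_all xs f"
  have g: "g \<in> fpf_involutions S"
    using switch_all_in_involutions_with_pairs[OF okx f] by (simp add: g_def involutions_with_pairs_def)
  obtain R where R: "finite R" "card R \<le> length xs"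
    "\<And>x. g x \<noteq> f x \<Longrightarrow> x \<in> pair_elems xs \<or> x \<in> R \<or> g x \<in> R"
    using Cons.IH[OF okx] by (auto simp: g_def)
  show ?case
  proof (intro exI conjI allI impI)
    show "finite (insert (g a) R)" using R by simp
    show "card (insert (g a) R) \<le> length (p # xs)" using R by (simp add: card_insert_if)
    fix x assume x: "switch_all (p # xs) f x \<noteq> f x"
    have e: "switch_all (p # xs) f = switch a c g" by (simp add: p g_def)
    show "x \<in> pair_elems (p # xs) \<or> x \<in> insert (g a) R \<or> switch_all (p # xs) f x \<in> insert (g a) R"
    proof (cases "switch a c g x = g x")
      case True
      then show ?thesis using R(3)[of x] x e by auto
    next
      case False
      then have "x = a \<or> x = c \<or> x = g a \<or> x = g c" using switch_other by metis
      moreover have "g a \<noteq> c" using False by (auto simp: switch_def)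
      ultimately show ?thesis using switch_at_partner[OF g ac(2,3,1)] e p by auto
    qed
  qed
qed

lemma pair_list_of_closed_set:
  assumes "finite X" "X \<subseteq> S" "f \<in> fpf_involutions S" "\<And>x. x \<in> X \<Longrightarrow> f x \<in> X"
  shows "\<exists>xs. disjoint_pairs S xs \<and> pair_elems xs = X \<and> (\<forall>p\<in>set xs. f (fst p) = snd p)"
  using assms
proof (induction "card X" arbitrary: X rule: less_induct)
  case less
  note f = less.prems(3)
  show ?case
  proof (cases "X = {}")
    case True
    then show ?thesis by (intro exI[of _ "[]"]) (simp add: disjoint_pairs_def)
  next
    case False
    then obtain a where a: "a \<in> X" by blast
    have aS: "a \<in> S" using a less.prems by auto
    have fa: "f a \<in> X" "f a \<noteq> a" "f (f a) = a"
      using less.prems(4)[OF a] fpf_involutionsD[OF f aS] by auto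
    define X' where "X' = X - {a, f a}"
    have closed: "f x \<in> X'" if "x \<in> X'" for x
    proof -
      have x: "x \<in> X" "x \<noteq> a" "x \<noteq> f a" using that by (auto simp: X'_def)
      have "f (f x) = x" using fpf_involutionsD[OF f] x less.prems(2) by blast
      then have "f x \<noteq> f a" "f x \<noteq> a" using fa x by metis+
      then show ?thesis using less.prems(4)[OF x(1)] by (auto simp: X'_def)
    qed
    have "card X' < card X" unfolding X'_def using a less.prems(1) by (intro psubset_card_mono) auto
    moreover have "finite X'" "X' \<subseteq> S" using less.prems by (auto simp: X'_def)
    ultimately obtain xs where xs: "disjoint_pairs S xs" "pair_elems xs = X'"
        "\<forall>p\<in>set xs. f (fst p) = snd p"
      using less.hyps f closed by blast
    show ?thesis
    proof (intro exI[of _ "(a, f a) # xs"] conjI)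
      show "disjoint_pairs S ((a, f a) # xs)"
        using xs fa aS less.prems by (auto simp: disjoint_pairs_Cons X'_def)
      show "pair_elems ((a, f a) # xs) = X" using xs a fa by (auto simp: X'_def)
      show "\<forall>p\<in>set ((a, f a) # xs). f (fst p) = snd p" using xs by auto
    qed
  qed
qed

lemma disjoint_pairs_inj:
  assumes "disjoint_pairs S xs"
  shows "distinct xs \<and> inj_on (\<lambda>p. {fst p, snd p}) (set xs)"
  using assms
proof (induction xs)
  case Nil
  then show ?case by simp
next
  case (Cons p xs)
  have ok: "disjoint_pairs S xs" "fst p \<notin> pair_elems xs" "snd p \<notin> pair_elems xs"
    using Cons.prems by (auto simp: disjoint_pairs_Cons)
  have "{fst q, snd q} \<noteq> {fst p, snd p}" if "q \<in> set xs" for q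
    using ok(2,3) that by (force simp: pair_elems_def doubleton_eq_iff)
  moreover have "p \<notin> set xs" using ok(2) fst_in_pair_elems by blast
  ultimately show ?case using Cons.IH[OF ok(1)] by (auto simp: inj_on_def)
qed

lemma involutions_with_pairs_eq:
  assumes ok: "disjoint_pairs S xs" and f: "f \<in> fpf_involutions S"
    and f_pairs: "\<forall>p\<in>set xs. f (fst p) = snd p"
  shows "involutions_with_pairs S xs = {g \<in> fpf_involutions S. \<forall>x\<in>pair_elems xs. g x = f x}"
proof safe
  fix g x assume g: "g \<in> involutions_with_pairs S xs" and x: "x \<in> pair_elems xs"
  have gi: "g \<in> fpf_involutions S" using g by (simp add: involutions_with_pairs_def)
  obtain q where q: "q \<in> set xs" "x = fst q \<or> x = snd q" using x by (auto simp: pair_elems_def)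
  have qS: "fst q \<in> S" using ok fst_in_pair_elems[OF q(1)] by (auto simp: disjoint_pairs_def)
  have "g (fst q) = snd q" "f (fst q) = snd q" using g q f_pairs by (auto simp: involutions_with_pairs_def)
  then show "g x = f x" using q fpf_involutionsD[OF gi qS] fpf_involutionsD[OF f qS] by auto
next
  fix g assume "g \<in> fpf_involutions S" "\<forall>x\<in>pair_elems xs. g x = f x"
  then show "g \<in> involutions_with_pairs S xs"
    using f_pairs fst_in_pair_elems by (fastforce simp: involutions_with_pairs_def)
qed (simp add: involutions_with_pairs_def)

lemma card_set_mset_le_size: "card (set_mset A) \<le> size A"
  by (induction A) (auto simp: card_insert_if)

lemma edge_of_pair_doubleton:
  assumes "x \<noteq> y"
  shows "edge_of_pair {x, y} = Upair (fst x) (fst y)"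
proof -
  have "(\<exists>a b. {x, y} = {a, b} \<and> a \<noteq> b \<and> u = Upair (fst a) (fst b)) \<longleftrightarrow> u = Upair (fst x) (fst y)"
    for u
    using assms by (metis doubleton_eq_iff Upair_inject)
  then show ?thesis unfolding edge_of_pair_def by simp
qed

lemma wf_component: "wf_mgraph G \<Longrightarrow> wf_mgraph (component G v)"
  by (auto simp: wf_mgraph_def component_def comp_vertices_def)

lemma wf_mgraph_iso:
  assumes G: "wf_mgraph G" and iso: "mgraph_iso G H"
  shows "wf_mgraph H"
proof -
  obtain f where f: "bij_betw f (fst G) (fst H)" "image_mset (map_uprod f) (snd G) = snd H"
    using iso by (auto simp: mgraph_iso_def)
  have fH: "fst H = f ` fst G" using f(1) by (simp add: bij_betw_def)
  show ?thesis unfolding wf_mgraph_def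
  proof (intro conjI ballI)
    show "finite (fst H)" using G fH by (simp add: wf_mgraph_def)
    fix e assume "e \<in># snd H"
    then obtain e0 where e0: "e0 \<in># snd G" "e = map_uprod f e0" using f(2) by (metis imageE set_image_mset)
    have "set_uprod e0 \<subseteq> fst G" using G e0(1) by (simp add: wf_mgraph_def)
    then show "set_uprod e \<subseteq> fst H" using e0(2) fH by (auto simp: uprod.set_map)
  qed
qed

lemma abs_le_SUP_of_finite_support:
  assumes gf: "graph_functional \<psi>" and fs: "finite_support \<psi>" and G: "wf_mgraph G"
  shows "\<bar>\<psi> G\<bar> \<le> (SUP H\<in>{H. wf_mgraph H}. \<bar>\<psi> H\<bar>)"
proof -
  obtain R where R: "finite R" "\<And>G. wf_mgraph G \<Longrightarrow> \<psi> G \<noteq> 0 \<Longrightarrow> \<exists>H\<in>R. mgraph_iso G H"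
    using fs by (auto simp: finite_support_def)
  have "\<bar>\<psi> G'\<bar> \<le> (\<Sum>H\<in>R. \<bar>\<psi> H\<bar>)" if G': "wf_mgraph G'" for G'
  proof (cases "\<psi> G' = 0")
    case True
    then show ?thesis by (simp add: sum_nonneg)
  next
    case False
    then obtain H where H: "H \<in> R" "mgraph_iso G' H" using R(2)[OF G'] by blast
    then have "\<psi> G' = \<psi> H" using gf G' wf_mgraph_iso[OF G'] unfolding graph_functional_def by blast
    moreover have "\<bar>\<psi> H\<bar> \<le> (\<Sum>H\<in>R. \<bar>\<psi> H\<bar>)" by (rule member_le_sum[OF H(1)]) (auto simp: R(1))
    ultimately show ?thesis by simp
  qed
  then have "bdd_above ((\<lambda>H. \<bar>\<psi> H\<bar>) ` {H. wf_mgraph H})" by (auto intro!: bdd_aboveI)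
  then show ?thesis by (rule cSUP_upper[rotated]) (use G in simp)
qed

definition hop_dist :: "mgraph \<Rightarrow> nat \<Rightarrow> nat \<Rightarrow> nat" where
  "hop_dist G v u = (LEAST k. (adjacent G ^^ k) v u)"

lemma hop_dist_parent:
  assumes "(adjacent G)\<^sup>*\<^sup>* v u" "u \<noteq> v"
  shows "\<exists>w. adjacent G w u \<and> (adjacent G)\<^sup>*\<^sup>* v w \<and> hop_dist G v w < hop_dist G v u"
proof -
  obtain k where "(adjacent G ^^ k) v u" using assms(1) rtranclp_power by metis
  then have d: "(adjacent G ^^ hop_dist G v u) v u" unfolding hop_dist_def by (rule LeastI)
  then obtain m where m: "hop_dist G v u = Suc m" using assms(2) by (cases "hop_dist G v u") auto
  then obtain w where w: "(adjacent G ^^ m) v w" "adjacent G w u" using d by (auto elim: relpowp_Suc_E)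
  have "hop_dist G v w \<le> m" unfolding hop_dist_def by (rule Least_le) (rule w(1))
  then show ?thesis using w m relpowp_imp_rtranclp[OF w(1)] by auto
qed

text \<open>Joining each vertex other than v to a neighbour closer to v gives distinct edges.\<close>

lemma card_comp_vertices_le:
  assumes wf: "wf_mgraph G"
  shows "card (comp_vertices G v) \<le> num_edges (component G v) + 1"
proof -
  define C where "C = comp_vertices G v"
  have finC: "finite C" using wf by (auto simp: C_def comp_vertices_def wf_mgraph_def)
  define parent where
    "parent u = (SOME w. adjacent G w u \<and> (adjacent G)\<^sup>*\<^sup>* v w \<and> hop_dist G v w < hop_dist G v u)" for u
  have parent: "adjacent G (parent u) u" "(adjacent G)\<^sup>*\<^sup>* v (parent u)"
      "hop_dist G v (parent u) < hop_dist G v u" if "u \<in> C - {v}" for u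
    using someI_ex[OF hop_dist_parent] that unfolding parent_def C_def comp_vertices_def by auto
  define edge where "edge u = Upair (parent u) u" for u
  have "inj_on edge (C - {v})"
  proof (rule inj_onI)
    fix u u' assume u: "u \<in> C - {v}" and u': "u' \<in> C - {v}" and e: "edge u = edge u'"
    show "u = u'"
    proof (rule ccontr)
      assume "u \<noteq> u'"
      then have "parent u = u'" "parent u' = u" using e by (auto simp: edge_def)
      then show False using parent(3)[OF u] parent(3)[OF u'] by simp
    qed
  qed
  moreover have "edge ` (C - {v}) \<subseteq> set_mset (snd (component G v))"
  proof
    fix e assume "e \<in> edge ` (C - {v})"
    then obtain u where u: "u \<in> C - {v}" "e = edge u" by blast
    have "parent u \<in> fst G" using parent(1)[OF u(1)] wf by (auto simp: adjacent_def wf_mgraph_def)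
    then have "parent u \<in> C" using parent(2)[OF u(1)] by (simp add: C_def comp_vertices_def)
    then show "e \<in> set_mset (snd (component G v))"
      using parent(1)[OF u(1)] u by (auto simp: edge_def component_def adjacent_def C_def)
  qed
  ultimately have "card (C - {v}) \<le> card (set_mset (snd (component G v)))"
    by (simp add: card_inj_on_le)
  also have "\<dots> \<le> num_edges (component G v)" by (simp add: num_edges_def card_set_mset_le_size)
  finally have "card (C - {v}) \<le> num_edges (component G v)" .
  moreover have "card C \<le> card (C - {v}) + 1" using finC by (cases "v \<in> C") (simp_all add: card_Diff_singleton_if)
  ultimately show ?thesis unfolding C_def by linarith
qed

section \<open>The configuration graph of an involution\<close>

locale config_graphs =
  fixes n :: nat and S :: "(nat \<times> nat) set"
  assumes finite_S: "finite S" and vertex_bound: "\<And>x. x \<in> S \<Longrightarrow> fst x < n"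
begin

definition graph_of :: "(nat \<times> nat \<Rightarrow> nat \<times> nat) \<Rightarrow> mgraph" where
  "graph_of f = config_graph n (matching_of S f)"

definition comp_of :: "(nat \<times> nat \<Rightarrow> nat \<times> nat) \<Rightarrow> nat \<Rightarrow> nat set" where
  "comp_of f v = comp_vertices (graph_of f) v"

lemma fst_graph_of [simp]: "fst (graph_of f) = {..<n}"
  by (simp add: graph_of_def config_graph_def)

lemma finite_matching_of: "finite (matching_of S f)"
  using finite_S by (simp add: matching_of_def)

lemma edge_of_pair_partner:
  assumes "f \<in> fpf_involutions S" "x \<in> S"
  shows "edge_of_pair {x, f x} = Upair (fst x) (fst (f x))"
  using edge_of_pair_doubleton fpf_involutionsD[OF assms] by metis

lemma set_edges_graph_of:
  assumes f: "f \<in> fpf_involutions S"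
  shows "set_mset (snd (graph_of f)) = (\<lambda>x. Upair (fst x) (fst (f x))) ` S"
proof -
  have "set_mset (snd (graph_of f)) = edge_of_pair ` matching_of S f"
    using finite_matching_of by (simp add: graph_of_def config_graph_def)
  also have "\<dots> = (\<lambda>x. Upair (fst x) (fst (f x))) ` S"
    using edge_of_pair_partner[OF f] by (force simp: matching_of_def image_image)
  finally show ?thesis .
qed

lemma adjacent_graph_of:
  assumes f: "f \<in> fpf_involutions S"
  shows "adjacent (graph_of f) u w \<longleftrightarrow> (\<exists>x\<in>S. fst x = u \<and> fst (f x) = w)"
proof
  assume "adjacent (graph_of f) u w"
  then obtain x where x: "x \<in> S" "Upair u w = Upair (fst x) (fst (f x))"
    using set_edges_graph_of[OF f] by (auto simp: adjacent_def)
  then have "fst x = u \<and> fst (f x) = w \<or> fst (f x) = u \<and> fst (f (f x)) = w"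
    using fpf_involutionsD[OF f x(1)] by auto
  then show "\<exists>x\<in>S. fst x = u \<and> fst (f x) = w" using x(1) fpf_involutionsD[OF f x(1)] by blast
next
  assume "\<exists>x\<in>S. fst x = u \<and> fst (f x) = w"
  then show "adjacent (graph_of f) u w" using set_edges_graph_of[OF f] by (force simp: adjacent_def)
qed

lemma wf_graph_of:
  assumes f: "f \<in> fpf_involutions S"
  shows "wf_mgraph (graph_of f)"
  using set_edges_graph_of[OF f] vertex_bound fpf_involutionsD[OF f] by (auto simp: wf_mgraph_def)

lemma rtranclp_adjacent_graph_of_sym:
  assumes f: "f \<in> fpf_involutions S" and "(adjacent (graph_of f))\<^sup>*\<^sup>* u w"
  shows "(adjacent (graph_of f))\<^sup>*\<^sup>* w u"
  using assms(2)
proof (induction rule: rtranclp_induct)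
  case base
  then show ?case by simp
next
  case (step y z)
  then have "adjacent (graph_of f) z y"
    using adjacent_graph_of[OF f] fpf_involutionsD[OF f] by metis
  then show ?case using step(3) by (meson converse_rtranclp_into_rtranclp)
qed

lemma comp_of_less: "u \<in> comp_of f w \<Longrightarrow> u < n"
  by (auto simp: comp_of_def comp_vertices_def)

lemma comp_of_self: "w < n \<Longrightarrow> w \<in> comp_of f w"
  by (simp add: comp_of_def comp_vertices_def)

lemma comp_of_sym:
  assumes f: "f \<in> fpf_involutions S" and u: "u \<in> comp_of f w" and w: "w < n"
  shows "w \<in> comp_of f u"
  using u w rtranclp_adjacent_graph_of_sym[OF f] by (auto simp: comp_of_def comp_vertices_def)

lemma comp_of_eq:
  assumes f: "f \<in> fpf_involutions S" and u: "u \<in> comp_of f w" and w: "w < n"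
  shows "comp_of f u = comp_of f w" "component (graph_of f) u = component (graph_of f) w"
proof -
  have r: "(adjacent (graph_of f))\<^sup>*\<^sup>* w u" using u by (auto simp: comp_of_def comp_vertices_def)
  have r': "(adjacent (graph_of f))\<^sup>*\<^sup>* u w" using rtranclp_adjacent_graph_of_sym[OF f r] .
  show "comp_of f u = comp_of f w"
    using r r' by (auto simp: comp_of_def comp_vertices_def intro: rtranclp_trans)
  then show "component (graph_of f) u = component (graph_of f) w"
    by (simp add: component_def comp_of_def)
qed

lemma comp_of_partner:
  assumes f: "f \<in> fpf_involutions S" and x: "x \<in> S" and c: "fst x \<in> comp_of f w"
  shows "fst (f x) \<in> comp_of f w"
proof -
  have "adjacent (graph_of f) (fst x) (fst (f x))" using adjacent_graph_of[OF f] x by blast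
  moreover have "fst (f x) < n" using vertex_bound fpf_involutionsD[OF f x] by blast
  ultimately show ?thesis
    using c by (auto simp: comp_of_def comp_vertices_def intro: rtranclp.rtrancl_into_rtrancl)
qed

lemma component_graph_of:
  "snd (component (graph_of f) w) = image_mset edge_of_pair
     (mset_set {e \<in> matching_of S f. set_uprod (edge_of_pair e) \<subseteq> comp_of f w})"
  by (simp add: component_def comp_of_def graph_of_def config_graph_def filter_mset_image_mset
      finite_matching_of)

lemma matching_of_within:
  assumes f: "f \<in> fpf_involutions S"
  shows "{e \<in> matching_of S f. set_uprod (edge_of_pair e) \<subseteq> C}
           = (\<lambda>x. {x, f x}) ` {x \<in> S. fst x \<in> C \<and> fst (f x) \<in> C}"
  using edge_of_pair_partner[OF f] by (auto simp: matching_of_def)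

lemma reachable_iff_if_agree:
  assumes f: "f \<in> fpf_involutions S" and g: "g \<in> fpf_involutions S"
    and agree: "\<And>x. x \<in> S \<Longrightarrow> fst x \<in> comp_of f w \<Longrightarrow> g x = f x"
  shows "(adjacent (graph_of g))\<^sup>*\<^sup>* w u \<longleftrightarrow> (adjacent (graph_of f))\<^sup>*\<^sup>* w u"
proof
  assume "(adjacent (graph_of g))\<^sup>*\<^sup>* w u"
  then show "(adjacent (graph_of f))\<^sup>*\<^sup>* w u"
  proof (induction rule: rtranclp_induct)
    case (step y z)
    obtain x where x: "x \<in> S" "fst x = y" "fst (g x) = z"
      using step(2) adjacent_graph_of[OF g] by blast
    have "y \<in> comp_of f w"
      using step(3) x vertex_bound[OF x(1)] by (auto simp: comp_of_def comp_vertices_def)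
    then have "adjacent (graph_of f) y z" using agree x adjacent_graph_of[OF f] by metis
    then show ?case using step(3) by (meson rtranclp.rtrancl_into_rtrancl)
  qed simp
next
  assume "(adjacent (graph_of f))\<^sup>*\<^sup>* w u"
  then show "(adjacent (graph_of g))\<^sup>*\<^sup>* w u"
  proof (induction rule: rtranclp_induct)
    case (step y z)
    obtain x where x: "x \<in> S" "fst x = y" "fst (f x) = z"
      using step(2) adjacent_graph_of[OF f] by blast
    have "y \<in> comp_of f w"
      using step(1) x vertex_bound[OF x(1)] by (auto simp: comp_of_def comp_vertices_def)
    then have "adjacent (graph_of g) y z" using agree x adjacent_graph_of[OF g] by metis
    then show ?case using step(3) by (meson rtranclp.rtrancl_into_rtrancl)
  qed simp
qed

lemma comp_of_agree:
  assumes f: "f \<in> fpf_involutions S" and g: "g \<in> fpf_involutions S"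
    and agree: "\<And>x. x \<in> S \<Longrightarrow> fst x \<in> comp_of f w \<Longrightarrow> g x = f x"
  shows "comp_of g w = comp_of f w" "component (graph_of g) w = component (graph_of f) w"
proof -
  show comp_eq: "comp_of g w = comp_of f w"
    using reachable_iff_if_agree[OF f g agree] by (auto simp: comp_of_def comp_vertices_def)
  let ?C = "comp_of f w"
  have "(\<lambda>x. {x, g x}) ` {x \<in> S. fst x \<in> ?C \<and> fst (g x) \<in> ?C}
          = (\<lambda>x. {x, f x}) ` {x \<in> S. fst x \<in> ?C \<and> fst (f x) \<in> ?C}"
    using agree by (intro image_cong) auto
  then have "{e \<in> matching_of S g. set_uprod (edge_of_pair e) \<subseteq> ?C}
               = {e \<in> matching_of S f. set_uprod (edge_of_pair e) \<subseteq> ?C}"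
    unfolding matching_of_within[OF f] matching_of_within[OF g] .
  then have "snd (component (graph_of g) w) = snd (component (graph_of f) w)"
    by (simp add: component_graph_of comp_eq)
  moreover have "fst (component (graph_of g) w) = fst (component (graph_of f) w)"
    using comp_eq by (simp add: component_def comp_of_def)
  ultimately show "component (graph_of g) w = component (graph_of f) w" by (simp add: prod_eq_iff)
qed

definition comp_half_edges :: "(nat \<times> nat \<Rightarrow> nat \<times> nat) \<Rightarrow> nat \<Rightarrow> (nat \<times> nat) set" where
  "comp_half_edges f v = {x \<in> S. fst x \<in> comp_of f v}"

definition fiber :: "nat \<Rightarrow> (nat \<times> nat \<Rightarrow> nat \<times> nat) \<Rightarrow> (nat \<times> nat \<Rightarrow> nat \<times> nat) set" where
  "fiber v f = {g \<in> fpf_involutions S. \<forall>x\<in>comp_half_edges f v. g x = f x}"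

lemma fiber_self: "f \<in> fpf_involutions S \<Longrightarrow> f \<in> fiber v f"
  by (simp add: fiber_def)

lemma fiber_comp:
  assumes f: "f \<in> fpf_involutions S" and g: "g \<in> fiber v f"
  shows "comp_of g v = comp_of f v" "component (graph_of g) v = component (graph_of f) v"
    "fiber v g = fiber v f"
proof -
  have gi: "g \<in> fpf_involutions S" and agree: "\<forall>x\<in>comp_half_edges f v. g x = f x"
    using g by (auto simp: fiber_def)
  then show c: "comp_of g v = comp_of f v" "component (graph_of g) v = component (graph_of f) v"
    using comp_of_agree[OF f gi] by (auto simp: comp_half_edges_def)
  then have "comp_half_edges g v = comp_half_edges f v" by (simp add: comp_half_edges_def)
  then show "fiber v g = fiber v f" using agree by (auto simp: fiber_def)
qed

lemma comp_half_edges_partner: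
  assumes f: "f \<in> fpf_involutions S" and x: "x \<in> comp_half_edges f v"
  shows "f x \<in> comp_half_edges f v"
  using x comp_of_partner[OF f] fpf_involutionsD(1)[OF f] by (simp add: comp_half_edges_def)

lemma num_edges_component_eq_length:
  assumes f: "f \<in> fpf_involutions S" and ok: "disjoint_pairs S xs"
    and xs: "pair_elems xs = comp_half_edges f v" "\<forall>p\<in>set xs. f (fst p) = snd p"
  shows "num_edges (component (graph_of f) v) = length xs"
proof -
  have partner: "{q, f q} = {fst p, snd p}" if "p \<in> set xs" "q = fst p \<or> q = snd p" for p q
  proof -
    have p: "fst p \<in> S" using ok fst_in_pair_elems[OF that(1)] by (auto simp: disjoint_pairs_def)
    have "f (fst p) = snd p" using that(1) xs(2) by blast
    moreover from this have "f (snd p) = fst p" using fpf_involutionsD(3)[OF f p] by simp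
    ultimately show ?thesis using that(2) by auto
  qed
  have "{x \<in> S. fst x \<in> comp_of f v \<and> fst (f x) \<in> comp_of f v} = pair_elems xs"
    using xs(1) comp_of_partner[OF f] by (auto simp: comp_half_edges_def)
  moreover have "(\<lambda>x. {x, f x}) ` pair_elems xs = (\<lambda>p. {fst p, snd p}) ` set xs"
  proof (intro equalityI subsetI)
    fix e assume "e \<in> (\<lambda>x. {x, f x}) ` pair_elems xs"
    then obtain q where "q \<in> pair_elems xs" "e = {q, f q}" by blast
    moreover from this obtain p where "p \<in> set xs" "q = fst p \<or> q = snd p"
      by (auto simp: pair_elems_iff)
    ultimately show "e \<in> (\<lambda>p. {fst p, snd p}) ` set xs" using partner by blast
  next
    fix e assume "e \<in> (\<lambda>p. {fst p, snd p}) ` set xs"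
    then obtain p where "p \<in> set xs" "e = {fst p, snd p}" by blast
    then show "e \<in> (\<lambda>x. {x, f x}) ` pair_elems xs"
      using partner[of p "fst p"] fst_in_pair_elems by blast
  qed
  ultimately have "{e \<in> matching_of S f. set_uprod (edge_of_pair e) \<subseteq> comp_of f v}
                     = (\<lambda>p. {fst p, snd p}) ` set xs"
    by (simp add: matching_of_within[OF f])
  then show ?thesis
    using disjoint_pairs_inj[OF ok]
    by (simp add: num_edges_def component_graph_of card_image distinct_card)
qed

lemma fiber_pair_list:
  assumes f: "f \<in> fpf_involutions S"
  obtains xs where "disjoint_pairs S xs" "pair_elems xs = comp_half_edges f v"
    "involutions_with_pairs S xs = fiber v f" "num_edges (component (graph_of f) v) = length xs"
proof -
  have "finite (comp_half_edges f v)" "comp_half_edges f v \<subseteq> S"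
    using finite_S by (auto simp: comp_half_edges_def)
  then obtain xs where xs: "disjoint_pairs S xs" "pair_elems xs = comp_half_edges f v"
      "\<forall>p\<in>set xs. f (fst p) = snd p"
    using pair_list_of_closed_set[OF _ _ f comp_half_edges_partner[OF f]] by blast
  then show ?thesis
    using that involutions_with_pairs_eq[OF xs(1) f xs(3)] num_edges_component_eq_length[OF f xs]
    by (simp add: fiber_def)
qed

end

section \<open>The variance bound\<close>

lemma sum_eq_sum_class_means:
  fixes X :: "'a \<Rightarrow> real"
  assumes A: "finite A" and sub: "\<And>x. x \<in> A \<Longrightarrow> F x \<subseteq> A" and self: "\<And>x. x \<in> A \<Longrightarrow> x \<in> F x"
    and class_eq: "\<And>x y. x \<in> A \<Longrightarrow> y \<in> F x \<Longrightarrow> F y = F x"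
  shows "(\<Sum>x\<in>A. X x) = (\<Sum>x\<in>A. (\<Sum>y\<in>F x. X y) / card (F x))"
proof -
  have sym: "y \<in> F x \<longleftrightarrow> x \<in> F y" if "x \<in> A" "y \<in> A" for x y
    using that self class_eq by metis
  have "(\<Sum>x\<in>A. (\<Sum>y\<in>F x. X y) / card (F x))
          = (\<Sum>x\<in>A. \<Sum>y\<in>A. if y \<in> F x then X y / card (F y) else 0)"
  proof (rule sum.cong[OF refl])
    fix x assume x: "x \<in> A"
    have "(\<Sum>y\<in>F x. X y) / card (F x) = (\<Sum>y\<in>{y \<in> A. y \<in> F x}. X y / card (F y))"
      using sub[OF x] class_eq[OF x] by (simp add: sum_divide_distrib Int_absorb1 Collect_conj_eq)
    then show "(\<Sum>y\<in>F x. X y) / card (F x) = (\<Sum>y\<in>A. if y \<in> F x then X y / card (F y) else 0)"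
      by (simp add: sum.inter_filter[OF A])
  qed
  also have "\<dots> = (\<Sum>y\<in>A. \<Sum>x\<in>A. if y \<in> F x then X y / card (F y) else 0)"
    by (rule sum.swap)
  also have "\<dots> = (\<Sum>y\<in>A. X y)"
  proof (rule sum.cong[OF refl])
    fix y assume y: "y \<in> A"
    have "{x \<in> A. y \<in> F x} = F y" using sub[OF y] sym[OF _ y] by blast
    then have "(\<Sum>x\<in>A. if y \<in> F x then X y / card (F y) else 0) = card (F y) * (X y / card (F y))"
      by (simp add: sum.inter_filter[OF A, symmetric])
    moreover have "card (F y) > 0"
      using self[OF y] finite_subset[OF sub[OF y] A] card_gt_0_iff by blast
    ultimately show "(\<Sum>x\<in>A. if y \<in> F x then X y / card (F y) else 0) = X y" by simp
  qed
  finally show ?thesis by simp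
qed

locale config_functional = config_graphs +
  fixes \<psi> :: "mgraph \<Rightarrow> real" and K :: nat and M :: real
  assumes psi_zero_if_large: "\<And>H. wf_mgraph H \<Longrightarrow> num_edges H \<ge> K \<Longrightarrow> \<psi> H = 0"
    and psi_bounded: "\<And>H. wf_mgraph H \<Longrightarrow> \<bar>\<psi> H\<bar> \<le> M"
begin

definition comp_value :: "(nat \<times> nat \<Rightarrow> nat \<times> nat) \<Rightarrow> nat \<Rightarrow> real" where
  "comp_value f w = \<psi> (component (graph_of f) w)"

definition psi_sum :: "(nat \<times> nat \<Rightarrow> nat \<times> nat) \<Rightarrow> real" where
  "psi_sum f = (\<Sum>w<n. comp_value f w)"

definition psi_mean :: real where
  "psi_mean = (\<Sum>f\<in>fpf_involutions S. psi_sum f) / card (fpf_involutions S)"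

lemma M_nonneg: "M \<ge> 0"
proof -
  have "wf_mgraph ({}, {#})" by (simp add: wf_mgraph_def)
  from psi_bounded[OF this] show ?thesis by linarith
qed

lemma abs_comp_value_le: "f \<in> fpf_involutions S \<Longrightarrow> \<bar>comp_value f w\<bar> \<le> M"
  unfolding comp_value_def by (rule psi_bounded[OF wf_component[OF wf_graph_of]])

lemma small_if_comp_value_nonzero:
  assumes f: "f \<in> fpf_involutions S" and nz: "comp_value f b \<noteq> 0"
  shows "card (comp_of f b) \<le> K" "num_edges (component (graph_of f) b) < K"
proof -
  have wf: "wf_mgraph (component (graph_of f) b)" by (rule wf_component[OF wf_graph_of[OF f]])
  show ne: "num_edges (component (graph_of f) b) < K"
    using psi_zero_if_large[OF wf] nz unfolding comp_value_def by (meson not_le)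
  show "card (comp_of f b) \<le> K" using card_comp_vertices_le[OF wf_graph_of[OF f], of b] ne
    unfolding comp_of_def by linarith
qed

text \<open>All components through b are the same one, of at most K vertices if it counts at all.\<close>

lemma sum_values_through_le:
  assumes f: "f \<in> fpf_involutions S"
  shows "(\<Sum>w<n. if b \<in> comp_of f w then \<bar>comp_value f w\<bar> else 0) \<le> K * M"
proof (cases "b < n")
  case False
  then have "b \<notin> comp_of f w" for w using comp_of_less by blast
  then show ?thesis using M_nonneg by simp
next
  case True
  have "{w \<in> {..<n}. b \<in> comp_of f w} = comp_of f b"
    using comp_of_sym[OF f] comp_of_sym[OF f _ True] comp_of_less by blast
  then have "(\<Sum>w<n. if b \<in> comp_of f w then \<bar>comp_value f w\<bar> else 0)
               = (\<Sum>w\<in>comp_of f b. \<bar>comp_value f w\<bar>)"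
    by (simp add: sum.inter_filter[symmetric])
  also have "\<dots> = card (comp_of f b) * \<bar>comp_value f b\<bar>"
    using comp_of_eq(2)[OF f _ True] by (simp add: comp_value_def)
  also have "\<dots> \<le> K * M"
  proof (cases "comp_value f b = 0")
    case True
    then show ?thesis using M_nonneg by simp
  next
    case False
    then show ?thesis
      using small_if_comp_value_nonzero(1)[OF f False] abs_comp_value_le[OF f, of b]
      by (intro mult_mono) auto
  qed
  finally show ?thesis .
qed

lemma sum_values_meeting_le:
  assumes f: "f \<in> fpf_involutions S" and B: "finite B" "card B \<le> K"
  shows "(\<Sum>w<n. if \<exists>b\<in>B. b \<in> comp_of f w then \<bar>comp_value f w\<bar> else 0) \<le> K * K * M"
proof -
  have "(\<Sum>w<n. if \<exists>b\<in>B. b \<in> comp_of f w then \<bar>comp_value f w\<bar> else 0)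
          \<le> (\<Sum>w<n. \<Sum>b\<in>B. if b \<in> comp_of f w then \<bar>comp_value f w\<bar> else 0)"
  proof (rule sum_mono)
    fix w
    show "(if \<exists>b\<in>B. b \<in> comp_of f w then \<bar>comp_value f w\<bar> else 0)
            \<le> (\<Sum>b\<in>B. if b \<in> comp_of f w then \<bar>comp_value f w\<bar> else 0)"
    proof (cases "\<exists>b\<in>B. b \<in> comp_of f w")
      case True
      then obtain b where b: "b \<in> B" "b \<in> comp_of f w" by blast
      have "(if b \<in> comp_of f w then \<bar>comp_value f w\<bar> else 0)
              \<le> (\<Sum>b\<in>B. if b \<in> comp_of f w then \<bar>comp_value f w\<bar> else 0)"
        by (rule member_le_sum[OF b(1)]) (auto simp: B)
      then show ?thesis using b True by simp
    qed (simp add: sum_nonneg)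
  qed
  also have "\<dots> = (\<Sum>b\<in>B. \<Sum>w<n. if b \<in> comp_of f w then \<bar>comp_value f w\<bar> else 0)"
    by (rule sum.swap)
  also have "\<dots> \<le> card B * (K * M)"
    using sum_mono[of B _ "\<lambda>_. K * M", OF sum_values_through_le[OF f]] by simp
  also have "\<dots> \<le> K * (K * M)" using B(2) M_nonneg by (intro mult_right_mono) auto
  finally show ?thesis by simp
qed

lemma psi_sum_diff_le:
  assumes f: "f \<in> fpf_involutions S" and g: "g \<in> fpf_involutions S"
    and A: "finite A" "card A \<le> K" and B: "finite B" "card B \<le> K"
    and changed: "\<And>w. w < n \<Longrightarrow> component (graph_of g) w \<noteq> component (graph_of f) w
                    \<Longrightarrow> (\<exists>a\<in>A. a \<in> comp_of f w) \<and> (\<exists>b\<in>B. b \<in> comp_of g w)"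
  shows "\<bar>psi_sum f - psi_sum g\<bar> \<le> 2 * K * K * M"
proof -
  have "\<bar>comp_value f w - comp_value g w\<bar>
          \<le> (if \<exists>a\<in>A. a \<in> comp_of f w then \<bar>comp_value f w\<bar> else 0)
            + (if \<exists>b\<in>B. b \<in> comp_of g w then \<bar>comp_value g w\<bar> else 0)" if "w < n" for w
    using changed[OF that] by (cases "component (graph_of g) w = component (graph_of f) w")
      (auto simp: comp_value_def)
  then have "\<bar>psi_sum f - psi_sum g\<bar>
      \<le> (\<Sum>w<n. if \<exists>a\<in>A. a \<in> comp_of f w then \<bar>comp_value f w\<bar> else 0)
        + (\<Sum>w<n. if \<exists>b\<in>B. b \<in> comp_of g w then \<bar>comp_value g w\<bar> else 0)"
    unfolding psi_sum_def sum_subtractf[symmetric] sum.distrib[symmetric]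
    by (intro order.trans[OF sum_abs] sum_mono) simp
  then show ?thesis
    using sum_values_meeting_le[OF f A] sum_values_meeting_le[OF g B] by linarith
qed

lemma psi_sum_switch_all_diff_le:
  assumes f0: "f0 \<in> fpf_involutions S" and v: "v < n" and nz: "comp_value f0 v \<noteq> 0"
    and xs: "disjoint_pairs S xs" "pair_elems xs = comp_half_edges f0 v"
      "involutions_with_pairs S xs = fiber v f0" "num_edges (component (graph_of f0) v) = length xs"
    and f: "f \<in> fpf_involutions S"
  shows "\<bar>psi_sum f - psi_sum (switch_all xs f)\<bar> \<le> 2 * K * K * M"
proof -
  define g where "g = switch_all xs f"
  have g_fiber: "g \<in> fiber v f0"
    using switch_all_in_involutions_with_pairs[OF xs(1) f] xs(3) by (simp add: g_def)
  then have g: "g \<in> fpf_involutions S" by (simp add: fiber_def)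
  define A where "A = comp_of f0 v"
  have elems: "x \<in> pair_elems xs \<longleftrightarrow> x \<in> S \<and> fst x \<in> A" for x
    using xs(2) by (simp add: comp_half_edges_def A_def)
  have "length xs < K" using small_if_comp_value_nonzero(2)[OF f0 nz] xs(4) by simp
  obtain R where R: "finite R" "card R \<le> length xs"
    "\<And>x. g x \<noteq> f x \<Longrightarrow> x \<in> pair_elems xs \<or> x \<in> R \<or> g x \<in> R"
    using switch_all_changed_few[OF xs(1) f] unfolding g_def by blast
  define B where "B = insert v (fst ` R)"
  have "card B \<le> Suc (card R)"
    unfolding B_def using R(1) card_image_le[OF R(1), of fst] by (simp add: card_insert_if)
  then have B: "finite B" "card B \<le> K" using R \<open>length xs < K\<close> by (auto simp: B_def)
  have "A \<subseteq> {..<n}" using comp_of_less by (auto simp: A_def)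
  then have A: "finite A" "card A \<le> K"
    using small_if_comp_value_nonzero(1)[OF f0 nz] finite_subset by (auto simp: A_def)
  show ?thesis unfolding g_def[symmetric]
  proof (rule psi_sum_diff_le[OF f g A B])
    fix w assume w: "w < n" and ne: "component (graph_of g) w \<noteq> component (graph_of f) w"
    obtain x where x: "x \<in> S" "fst x \<in> comp_of f w" "g x \<noteq> f x"
      using comp_of_agree(2)[OF f g, of w] ne by blast
    then have "x \<in> pair_elems xs \<or> f x \<in> pair_elems xs"
      using switch_all_changed[OF xs(1) f] by (simp add: g_def)
    then have "\<exists>a\<in>A. a \<in> comp_of f w" using comp_of_partner[OF f x(1,2)] elems x(2) by blast
    obtain y where y: "y \<in> S" "fst y \<in> comp_of g w" "f y \<noteq> g y"
      using comp_of_agree(2)[OF g f, of w] ne by metis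
    have "v \<in> comp_of g w" if "y \<in> pair_elems xs"
    proof -
      have "fst y \<in> comp_of g v" using that elems fiber_comp(1)[OF f0 g_fiber] by (simp add: A_def)
      then have "comp_of g w = comp_of g v"
        using comp_of_eq(1)[OF g _ v] comp_of_eq(1)[OF g y(2) w] by metis
      then show ?thesis using comp_of_self[OF v] by simp
    qed
    moreover have "y \<in> pair_elems xs \<or> y \<in> R \<or> g y \<in> R" using R(3) y(3) by metis
    ultimately have "\<exists>b\<in>B. b \<in> comp_of g w"
      using y(2) comp_of_partner[OF g y(1,2)] unfolding B_def by blast
    with \<open>\<exists>a\<in>A. a \<in> comp_of f w\<close>
    show "(\<exists>a\<in>A. a \<in> comp_of f w) \<and> (\<exists>b\<in>B. b \<in> comp_of g w)" ..
  qed
qed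

lemma sum_deviation_eq_0: "(\<Sum>f\<in>fpf_involutions S. psi_sum f - psi_mean) = 0"
  by (cases "fpf_involutions S = {}")
    (simp_all add: psi_mean_def sum_subtractf finite_fpf_involutions[OF finite_S])

lemma fiber_mean_deviation_le:
  assumes f0: "f0 \<in> fpf_involutions S" and v: "v < n" and nz: "comp_value f0 v \<noteq> 0"
  shows "\<bar>(\<Sum>g\<in>fiber v f0. psi_sum g - psi_mean) / card (fiber v f0)\<bar> \<le> 2 * K * K * M"
proof -
  let ?I = "fpf_involutions S"
  obtain xs where xs: "disjoint_pairs S xs" "pair_elems xs = comp_half_edges f0 v"
      "involutions_with_pairs S xs = fiber v f0" "num_edges (component (graph_of f0) v) = length xs"
    using fiber_pair_list[OF f0] .
  have "card ?I > 0" using f0 finite_fpf_involutions[OF finite_S] card_gt_0_iff by blast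
  have "(\<Sum>g\<in>fiber v f0. psi_sum g - psi_mean) / card (fiber v f0)
          = (\<Sum>f\<in>?I. psi_sum (switch_all xs f) - psi_mean) / card ?I"
    using mean_switch_all[OF finite_S xs(1)] xs(3) fiber_self[OF f0] by auto
  also have "\<dots> = (\<Sum>f\<in>?I. psi_sum (switch_all xs f) - psi_sum f) / card ?I"
    using sum_deviation_eq_0 by (simp add: sum_subtractf)
  finally have mean: "(\<Sum>g\<in>fiber v f0. psi_sum g - psi_mean) / card (fiber v f0)
                        = (\<Sum>f\<in>?I. psi_sum (switch_all xs f) - psi_sum f) / card ?I" .
  have "\<bar>\<Sum>f\<in>?I. psi_sum (switch_all xs f) - psi_sum f\<bar> \<le> (\<Sum>f\<in>?I. 2 * K * K * M)"
    using psi_sum_switch_all_diff_le[OF f0 v nz xs]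
    by (intro order.trans[OF sum_abs] sum_mono) (simp add: abs_minus_commute)
  then show ?thesis
    using \<open>card ?I > 0\<close> by (simp add: mean abs_divide divide_le_eq mult.commute)
qed

lemma covariance_le:
  assumes v: "v < n"
  shows "(\<Sum>f\<in>fpf_involutions S. comp_value f v * (psi_sum f - psi_mean))
           \<le> 2 * K * K * M * (\<Sum>f\<in>fpf_involutions S. \<bar>comp_value f v\<bar>)"
proof -
  let ?I = "fpf_involutions S"
  have "(\<Sum>f\<in>?I. comp_value f v * (psi_sum f - psi_mean))
          = (\<Sum>f0\<in>?I. (\<Sum>g\<in>fiber v f0. comp_value g v * (psi_sum g - psi_mean)) / card (fiber v f0))"
    by (rule sum_eq_sum_class_means[OF finite_fpf_involutions[OF finite_S] _ fiber_self fiber_comp(3)])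
      (auto simp: fiber_def)
  also have "\<dots> = (\<Sum>f0\<in>?I. comp_value f0 v
                     * ((\<Sum>g\<in>fiber v f0. psi_sum g - psi_mean) / card (fiber v f0)))"
    using fiber_comp(2) by (intro sum.cong) (simp_all add: comp_value_def sum_distrib_left)
  also have "\<dots> \<le> (\<Sum>f0\<in>?I. \<bar>comp_value f0 v\<bar> * (2 * K * K * M))"
  proof (rule sum_mono)
    fix f0 assume f0: "f0 \<in> ?I"
    show "comp_value f0 v * ((\<Sum>g\<in>fiber v f0. psi_sum g - psi_mean) / card (fiber v f0))
            \<le> \<bar>comp_value f0 v\<bar> * (2 * K * K * M)"
    proof (cases "comp_value f0 v = 0")
      case False
      let ?m = "(\<Sum>g\<in>fiber v f0. psi_sum g - psi_mean) / card (fiber v f0)"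
      have "comp_value f0 v * ?m \<le> \<bar>comp_value f0 v\<bar> * \<bar>?m\<bar>" by (metis abs_ge_self abs_mult)
      also have "\<dots> \<le> \<bar>comp_value f0 v\<bar> * (2 * K * K * M)"
        using fiber_mean_deviation_le[OF f0 v False] by (rule mult_left_mono) simp
      finally show ?thesis .
    qed simp
  qed
  also have "\<dots> = 2 * K * K * M * (\<Sum>f\<in>?I. \<bar>comp_value f v\<bar>)"
    by (simp add: sum_distrib_left mult.commute)
  finally show ?thesis .
qed

lemma sum_sq_deviation_le:
  "(\<Sum>f\<in>fpf_involutions S. (psi_sum f - psi_mean)\<^sup>2)
     \<le> 2 * K * K * M * (\<Sum>v<n. \<Sum>f\<in>fpf_involutions S. \<bar>comp_value f v\<bar>)"
proof -
  let ?I = "fpf_involutions S"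
  have "(\<Sum>f\<in>?I. (psi_sum f - psi_mean)\<^sup>2)
          = (\<Sum>f\<in>?I. psi_sum f * (psi_sum f - psi_mean) - psi_mean * (psi_sum f - psi_mean))"
    by (rule sum.cong) (simp_all add: power2_eq_square algebra_simps)
  also have "\<dots> = (\<Sum>f\<in>?I. psi_sum f * (psi_sum f - psi_mean))"
    using sum_deviation_eq_0 by (simp add: sum_subtractf sum_distrib_left[symmetric])
  also have "\<dots> = (\<Sum>v<n. \<Sum>f\<in>?I. comp_value f v * (psi_sum f - psi_mean))"
    by (simp add: psi_sum_def sum_distrib_right sum.swap[of _ ?I])
  also have "\<dots> \<le> (\<Sum>v<n. 2 * K * K * M * (\<Sum>f\<in>?I. \<bar>comp_value f v\<bar>))"
    by (rule sum_mono) (rule covariance_le, simp)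
  finally show ?thesis by (simp add: sum_distrib_left)
qed

lemma Psi_graph_of: "Psi \<psi> (graph_of f) = psi_sum f"
  by (simp add: Psi_def psi_sum_def comp_value_def)

end

lemma half_edges_eq_Sigma: "half_edges n d = Sigma {..<n} (\<lambda>i. {..<d i})"
  by (auto simp: half_edges_def)

lemma finite_half_edges: "finite (half_edges n d)"
  by (simp add: half_edges_eq_Sigma)

lemma fpf_involutions_half_edges_nonempty:
  "even (\<Sum>i<n. d i) \<Longrightarrow> fpf_involutions (half_edges n d) \<noteq> {}"
  by (rule fpf_involutions_nonempty[OF finite_half_edges]) (simp add: half_edges_eq_Sigma)

lemma config_model_eq_map_pmf:
  assumes "even (\<Sum>i<n. d i)"
  shows "config_model n d = map_pmf (\<lambda>f. config_graph n (matching_of (half_edges n d) f))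
                              (pmf_of_set (fpf_involutions (half_edges n d)))"
  using fpf_involutions_half_edges_nonempty[OF assms] finite_fpf_involutions[OF finite_half_edges]
  unfolding config_model_def config_matching_def
  by (simp add: map_pmf_of_set_bij_betw[OF bij_betw_matching_of, symmetric] pmf.map_comp o_def)

lemma expectation_pair_pmf_of_set:
  fixes h :: "'a \<times> 'b \<Rightarrow> real"
  assumes "A \<noteq> {}" "finite A" "B \<noteq> {}" "finite B"
  shows "measure_pmf.expectation (pair_pmf (pmf_of_set A) (pmf_of_set B)) h
           = (\<Sum>a\<in>A. \<Sum>b\<in>B. h (a, b)) / (card A * card B)"
proof -
  have "pair_pmf (pmf_of_set A) (pmf_of_set B) = pmf_of_set (A \<times> B)"
    using assms
    by (intro pmf_eqI) (auto simp: pmf_pair pmf_of_set[OF assms(1,2)] pmf_of_set[OF assms(3,4)]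
        indicator_def card_cartesian_product)
  then show ?thesis
    using assms by (simp add: integral_pmf_of_set sum.cartesian_product card_cartesian_product)
qed

theorem variance_Psi_config_model_le:
  fixes \<psi> :: "mgraph \<Rightarrow> real" and d :: "nat \<Rightarrow> nat"
  assumes n: "n > 0" and even: "even (\<Sum>i<n. d i)"
    and large: "\<And>H. wf_mgraph H \<Longrightarrow> num_edges H \<ge> K \<Longrightarrow> \<psi> H = 0"
    and bounded: "\<And>H. wf_mgraph H \<Longrightarrow> \<bar>\<psi> H\<bar> \<le> M"
  shows "measure_pmf.variance (config_model n d) (Psi \<psi>)
           \<le> 2 * M * real K ^ 2
              * measure_pmf.expectation (pair_pmf (config_model n d) (pmf_of_set {..<n}))
                  (\<lambda>(G, v). \<bar>\<psi> (component G v)\<bar>)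
              * real n"
proof -
  interpret config_functional n "half_edges n d" \<psi> K M
    using finite_half_edges by unfold_locales (auto simp: half_edges_def large bounded)
  let ?I = "fpf_involutions (half_edges n d)"
  have I: "?I \<noteq> {}" "finite ?I"
    using fpf_involutions_half_edges_nonempty[OF even] finite_fpf_involutions[OF finite_S] by auto
  have model: "config_model n d = map_pmf graph_of (pmf_of_set ?I)"
    using config_model_eq_map_pmf[OF even] by (simp add: graph_of_def[abs_def])
  have "measure_pmf.variance (config_model n d) (Psi \<psi>) = (\<Sum>f\<in>?I. (psi_sum f - psi_mean)\<^sup>2) / card ?I"
    by (simp add: model integral_pmf_of_set[OF I] Psi_graph_of psi_mean_def)
  also have "\<dots> \<le> 2 * K * K * M * (\<Sum>v<n. \<Sum>f\<in>?I. \<bar>comp_value f v\<bar>) / card ?I"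
    using sum_sq_deviation_le by (simp add: divide_right_mono)
  also have "\<dots> = 2 * M * real K ^ 2
      * measure_pmf.expectation (pair_pmf (config_model n d) (pmf_of_set {..<n}))
          (\<lambda>(G, v). \<bar>\<psi> (component G v)\<bar>) * n"
  proof -
    have "measure_pmf.expectation (pair_pmf (config_model n d) (pmf_of_set {..<n}))
            (\<lambda>(G, v). \<bar>\<psi> (component G v)\<bar>) = (\<Sum>v<n. \<Sum>f\<in>?I. \<bar>comp_value f v\<bar>) / (card ?I * n)"
      using n I
      by (simp add: model pair_map_pmf1 expectation_pair_pmf_of_set lessThan_empty_iff
          split_beta comp_value_def sum.swap[of _ ?I])
    then show ?thesis using n by (simp add: power2_eq_square)
  qed
  finally show ?thesis .
qed

text \<open>The switching argument gives the constant 2 directly.\<close>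

theorem lemma9p2:
  fixes d :: "nat \<Rightarrow> nat \<Rightarrow> nat"   \<comment> \<open>d n i = d_i for the n-th degree sequence, i < n\<close>
    and p :: "nat \<Rightarrow> real" and \<mu> :: real
    and \<psi> :: "mgraph \<Rightarrow> real" and K :: nat and M :: real
  defines "N \<equiv> \<lambda>n. \<Sum>i<n. d n i"
  assumes even: "\<And>n. n \<ge> 1 \<Longrightarrow> even (N n)"
    and p_nonneg: "\<And>k. p k \<ge> 0"
    and p_sum: "p sums 1"
    and A1: "\<And>k. (\<lambda>n. real (card {i. i < n \<and> d n i = k}) / real n) \<longlonglongrightarrow> p k"
    and mu_summable: "summable (\<lambda>k. real k * p k)"
    and mu_def: "\<mu> = (\<Sum>k. real k * p k)"
    and mu_pos: "\<mu> > 0"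
    and A2: "(\<lambda>n. real (N n) / real n) \<longlonglongrightarrow> \<mu>"
    and gf: "graph_functional \<psi>"
    and fs: "finite_support \<psi>"
    and K: "\<And>H. wf_mgraph H \<Longrightarrow> num_edges H \<ge> K \<Longrightarrow> \<psi> H = 0"
    and M_def: "M = (SUP H\<in>{H. wf_mgraph H}. \<bar>\<psi> H\<bar>)"
  shows "\<forall>n. n \<ge> 1 \<and> real (N n) \<ge> \<mu> * real n / 2 \<and> N n \<ge> 4 * K \<longrightarrow>
           measure_pmf.variance (config_model n (d n)) (Psi \<psi>)
             \<le> (4 + 16 / \<mu>) * M * real K ^ 2
                * measure_pmf.expectation (pair_pmf (config_model n (d n)) (pmf_of_set {..<n}))
                    (\<lambda>(G, v). \<bar>\<psi> (component G v)\<bar>)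
                * real n"
proof (intro allI impI)
  fix n assume n: "n \<ge> 1 \<and> real (N n) \<ge> \<mu> * real n / 2 \<and> N n \<ge> 4 * K"
  let ?E = "measure_pmf.expectation (pair_pmf (config_model n (d n)) (pmf_of_set {..<n}))
              (\<lambda>(G, v). \<bar>\<psi> (component G v)\<bar>)"
  have bounded: "\<And>H. wf_mgraph H \<Longrightarrow> \<bar>\<psi> H\<bar> \<le> M"
    using abs_le_SUP_of_finite_support[OF gf fs] M_def by simp
  have "M \<ge> 0" using bounded[of "({}, {#})"] by (simp add: wf_mgraph_def)
  moreover have "?E \<ge> 0" by (simp add: case_prod_beta)
  ultimately have nonneg: "M * real K ^ 2 * ?E * real n \<ge> 0" by simp
  have "measure_pmf.variance (config_model n (d n)) (Psi \<psi>) \<le> 2 * (M * real K ^ 2 * ?E * real n)"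
    using variance_Psi_config_model_le[OF _ _ K bounded, of n "d n"] n even
    by (simp add: N_def mult.assoc)
  also have "\<dots> \<le> (4 + 16 / \<mu>) * (M * real K ^ 2 * ?E * real n)"
    using mu_pos nonneg by (intro mult_right_mono) simp_all
  finally show "measure_pmf.variance (config_model n (d n)) (Psi \<psi>)
      \<le> (4 + 16 / \<mu>) * M * real K ^ 2 * ?E * real n" by (simp add: mult.assoc)
qed

end
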